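(* Let $\beta\in(1/2,1)$, $r>0$, assume the tail condition (T) and the coupling below, and suppose \[ \max_{q\in(0,1]}\Big(\tfrac{1+q}{2}-\alpha(q,r)-\beta\Big)<0 . \] Fix $t_1\in(0,1/2)$ and let $t_0=n^{-1}$. Then for every $\epsilon>0$ there exists $n_0=n_0(\epsilon)$ such that for all $n\ge n_0$, \[ \sup_{t\in(t_0,t_1)}\sqrt n\,\big|\mathbb E\tilde F^{(1)}(t)-\mathbb E\tilde F^{(0)}(t)\big|\,w(t)\le\epsilon . \]
   Context: $\epsilon_n=n^{-\beta}$. For each $n$ and $i\le n$, $G_{n,i}$ is a probability distribution on $(0,1)$ with $G_{n,i}(t)\ge t$. Tail condition (T): $\alpha:[0,1]\times(0,\infty)\to[0,\infty)$ is continuous, nondecreasing in $q$, nonincreasing in $r$, and there is $\delta_n\to0$ with $|-\log\Pr(X<n^{-q})-\alpha(q,r)\log n|\le\delta_n\log n$ for all $n$, $i\le n$, $q\in(0,1]$, $X\sim G_{n,i}$. Coupling: $I\subset\{1,\dots,n\}$ random with each $i$ included independently with probability $\epsilon_n$; $Q^{(0)}_1,\dots,Q^{(0)}_n$ i.i.d. $\mathrm{Unif}(0,1)$ independent of $I$; for $i\in I$, $Q^{(1)}_i\sim G_{n,i}$ independently of everything else; for $i\notin I$, $Q^{(1)}_i=Q^{(0)}_i$. For $h\in\{0,1\}$, $\tilde F^{(h)}(t)=\frac1n\sum_{i\in I}\mathbf 1(Q^{(h)}_i\le t)$; $\mathbb E$ is unconditional expectation; $w(t)=1/\sqrt{t(1-t)}$.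 *)

theory Defs
  imports "HOL-Probability.Probability"
begin

definition eps_n :: "real \<Rightarrow> nat \<Rightarrow> real" where
  "eps_n \<beta> n = real n powr (- \<beta>)"

text \<open>Coordinate i is a triple (b_i, U_i, Y_i): b_i ~ Bernoulli(eps_n) is the indicator
  of i in I, U_i ~ Unif(0,1) is Q^(0)_i, and Y_i ~ G n i is the fresh draw used for
  Q^(1)_i when i in I; all coordinates are independent.\<close>
definition coupling ::
  "real \<Rightarrow> (nat \<Rightarrow> nat \<Rightarrow> real measure) \<Rightarrow> nat \<Rightarrow> (nat \<Rightarrow> bool \<times> real \<times> real) measure" where
  "coupling \<beta> G n =
     PiM {1..n} (\<lambda>i. measure_pmf (bernoulli_pmf (eps_n \<beta> n))
                        \<Otimes>\<^sub>M (uniform_measure lborel {0<..<1} \<Otimes>\<^sub>M G n i))"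

definition Iset :: "nat \<Rightarrow> (nat \<Rightarrow> bool \<times> real \<times> real) \<Rightarrow> nat set" where
  "Iset n \<omega> = {i \<in> {1..n}. fst (\<omega> i)}"

definition Qh :: "nat \<Rightarrow> (nat \<Rightarrow> bool \<times> real \<times> real) \<Rightarrow> nat \<Rightarrow> real" where
  "Qh h \<omega> i = (if h = 0 then fst (snd (\<omega> i))
                 else (if fst (\<omega> i) then snd (snd (\<omega> i)) else fst (snd (\<omega> i))))"

definition Ftilde :: "nat \<Rightarrow> nat \<Rightarrow> (nat \<Rightarrow> bool \<times> real \<times> real) \<Rightarrow> real \<Rightarrow> real" where
  "Ftilde n h \<omega> t = (1 / real n) * (\<Sum>i\<in>Iset n \<omega>. if Qh h \<omega> i \<le> t then 1 else 0)"

definition wgt :: "real \<Rightarrow> real" where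
  "wgt t = 1 / sqrt (t * (1 - t))"

end

theory Submission
  imports Defs
begin

text \<open>Outside the random set \<open>I\<close> the two samples coincide, so the difference of the
  expectations is \<open>\<epsilon>\<^sub>n / n \<cdot> \<Sum>\<^sub>i (G\<^sub>n\<^sub>,\<^sub>i(t) - t) \<ge> 0\<close>, and it suffices to bound
  \<open>\<surd>n \<cdot> \<epsilon>\<^sub>n \<cdot> G\<^sub>n\<^sub>,\<^sub>i(t) \<cdot> w(t)\<close> uniformly in \<open>i\<close> and \<open>t\<close>. Write \<open>t = n powr -q\<close> with
  \<open>0 < q < 1\<close>, so that \<open>w(t) \<le> \<surd>2 \<cdot> n powr (q/2)\<close>. For \<open>q \<le> \<eta>\<close> the trivial bound
  \<open>G \<le> 1\<close> and \<open>\<beta> > 1/2\<close> suffice. For \<open>q > \<eta>\<close> we have \<open>t < n powr -(q - \<eta>)\<close>, and the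
  tail condition at \<open>q - \<eta>\<close> gives \<open>G(t) \<le> n powr (\<delta>\<^sub>n - \<alpha>(q - \<eta>, r))\<close>; by uniform
  continuity of \<open>\<alpha>(-, r)\<close> on \<open>[0, 1]\<close> the resulting exponent
  \<open>(1 + q)/2 - \<alpha>(q - \<eta>, r) - \<beta> + \<delta>\<^sub>n\<close> stays uniformly below zero.\<close>

lemma measure_pair_measure_Times:
  assumes "prob_space N" "prob_space M" "A \<in> sets N" "B \<in> sets M"
  shows "measure (N \<Otimes>\<^sub>M M) (A \<times> B) = measure N A * measure M B"
proof -
  interpret M: prob_space M by fact
  interpret N: prob_space N by fact
  have "emeasure (N \<Otimes>\<^sub>M M) (A \<times> B) = emeasure N A * emeasure M B"
    using M.emeasure_pair_measure_Times assms by blast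
  then show ?thesis
    unfolding measure_def by (simp add: enn2real_mult)
qed

lemma measure_uniform_unit_interval_atMost:
  assumes "0 \<le> t" "t < 1"
  shows "measure (uniform_measure lborel {0<..<1::real}) {..t} = t"
proof -
  have "{0<..<1::real} \<inter> {..t} = {0<..t}" using assms by auto
  then show ?thesis using assms by (subst measure_uniform_measure) auto
qed

lemma (in product_prob_space) integral_PiM_component:
  fixes f :: "'a \<Rightarrow> real"
  assumes "i \<in> I" "f \<in> borel_measurable (M i)"
  shows "(\<integral>\<omega>. f (\<omega> i) \<partial>PiM I M) = integral\<^sup>L (M i) f"
proof -
  have "(\<integral>\<omega>. f (\<omega> i) \<partial>PiM I M) = integral\<^sup>L (distr (PiM I M) (M i) (\<lambda>\<omega>. \<omega> i)) f"
    using integral_distr[of "\<lambda>\<omega>. \<omega> i" "PiM I M" "M i" f] assms by simp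
  then show ?thesis using PiM_component[OF assms(1)] by simp
qed

definition coupling_factor ::
  "real \<Rightarrow> (nat \<Rightarrow> nat \<Rightarrow> real measure) \<Rightarrow> nat \<Rightarrow> nat \<Rightarrow> (bool \<times> real \<times> real) measure" where
  "coupling_factor \<beta> G n i =
     measure_pmf (bernoulli_pmf (eps_n \<beta> n)) \<Otimes>\<^sub>M (uniform_measure lborel {0<..<1} \<Otimes>\<^sub>M G n i)"

lemma coupling_eq_PiM: "coupling \<beta> G n = PiM {1..n} (coupling_factor \<beta> G n)"
  unfolding coupling_def coupling_factor_def ..

lemma product_prob_space_coupling_factor:
  assumes "\<And>i. prob_space (G n i)"
  shows "product_prob_space (coupling_factor \<beta> G n)"
proof -
  have "prob_space (coupling_factor \<beta> G n i)" for i
    unfolding coupling_factor_def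
    by (intro prob_space_pair prob_space_measure_pmf assms prob_space_uniform_measure) auto
  then show ?thesis
    by (simp add: product_prob_space_def product_prob_space_axioms_def product_sigma_finite_def
        prob_space_imp_sigma_finite)
qed

lemma eps_n_bounds:
  assumes "0 \<le> \<beta>"
  shows "0 \<le> eps_n \<beta> n" "eps_n \<beta> n \<le> 1"
proof -
  show "0 \<le> eps_n \<beta> n" unfolding eps_n_def by simp
  show "eps_n \<beta> n \<le> 1"
  proof (cases "n = 0")
    case False
    then have "1 \<le> real n powr \<beta>" using assms by (intro ge_one_powr_ge_zero) auto
    then show ?thesis unfolding eps_n_def by (simp add: powr_minus inverse_le_1_iff)
  qed (simp add: eps_n_def)
qed

text \<open>The event \<open>i \<in> I \<and> Q\<^sup>h\<^sub>i \<le> t\<close>, read off the \<open>i\<close>-th coordinate \<open>(b\<^sub>i, U\<^sub>i, Y\<^sub>i)\<close>.\<close>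
definition selected_le :: "nat \<Rightarrow> real \<Rightarrow> (bool \<times> real \<times> real) set" where
  "selected_le h t = {True} \<times> (if h = 0 then {..t} \<times> UNIV else UNIV \<times> {..t})"

lemma Ftilde_eq_sum_indicator:
  "Ftilde n h \<omega> t = (1 / real n) * (\<Sum>i\<in>{1..n}. indicator (selected_le h t) (\<omega> i))"
proof -
  have "(\<Sum>i\<in>Iset n \<omega>. if Qh h \<omega> i \<le> t then 1 else 0)
      = (\<Sum>i\<in>{1..n}. if fst (\<omega> i) then (if Qh h \<omega> i \<le> t then 1 else 0) else (0::real))"
    unfolding Iset_def by (rule sum.inter_filter) simp
  also have "\<dots> = (\<Sum>i\<in>{1..n}. indicator (selected_le h t) (\<omega> i))"
    by (rule sum.cong) (auto simp: Qh_def selected_le_def indicator_def mem_Times_iff)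
  finally show ?thesis unfolding Ftilde_def by simp
qed

lemma expectation_Ftilde:
  assumes G_prob: "\<And>i. prob_space (G n i)" and G_sets: "\<And>i. sets (G n i) = sets borel"
  shows "(\<integral>\<omega>. Ftilde n h \<omega> t \<partial>coupling \<beta> G n)
       = (1 / real n) * (\<Sum>i\<in>{1..n}. measure (coupling_factor \<beta> G n i) (selected_le h t))"
proof -
  interpret product_prob_space "coupling_factor \<beta> G n" "{1..n}"
    using product_prob_space_coupling_factor G_prob by simp
  have sets: "selected_le h t \<in> sets (coupling_factor \<beta> G n i)" for i
    using G_sets unfolding selected_le_def coupling_factor_def
    by auto
  have component: "(\<integral>\<omega>. indicator (selected_le h t) (\<omega> i) \<partial>coupling \<beta> G n)
      = measure (coupling_factor \<beta> G n i) (selected_le h t)" if "i \<in> {1..n}" for i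
    using integral_PiM_component[OF that, of "indicator (selected_le h t)"] sets[of i]
    by (simp add: coupling_eq_PiM Int_absorb2 sets.sets_into_space)
  have integrable: "integrable (coupling \<beta> G n) (\<lambda>\<omega>. indicator (selected_le h t) (\<omega> i) :: real)"
    if "i \<in> {1..n}" for i
    using that sets unfolding coupling_eq_PiM
    by (intro P.integrable_const_bound[where B=1]
        measurable_compose[OF measurable_component_singleton borel_measurable_indicator]) auto
  show ?thesis
    unfolding Ftilde_eq_sum_indicator
    by (simp add: Bochner_Integration.integral_sum integrable component)
qed

lemma measure_selected_le:
  assumes "prob_space (G n i)" "sets (G n i) = sets borel" "0 \<le> \<beta>" "0 \<le> t" "t < 1"
  shows "measure (coupling_factor \<beta> G n i) (selected_le 0 t) = eps_n \<beta> n * t"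
    and "measure (coupling_factor \<beta> G n i) (selected_le 1 t) = eps_n \<beta> n * measure (G n i) {..t}"
proof -
  interpret G: prob_space "G n i" by fact
  have U: "prob_space (uniform_measure lborel {0<..<1::real})"
    by (rule prob_space_uniform_measure) auto
  have space_G: "space (G n i) = UNIV" using sets_eq_imp_space_eq[OF assms(2)] by simp
  have U_UNIV: "measure (uniform_measure lborel {0<..<1::real}) UNIV = 1"
    using prob_space.prob_space[OF U] by simp
  have bernoulli: "measure (measure_pmf (bernoulli_pmf (eps_n \<beta> n))) {True} = eps_n \<beta> n"
    using eps_n_bounds[OF assms(3)] by (simp add: measure_pmf_single)
  note Times = measure_pair_measure_Times[OF prob_space_measure_pmf prob_space_pair[OF U assms(1)]]
    measure_pair_measure_Times[OF U assms(1)]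
  show "measure (coupling_factor \<beta> G n i) (selected_le 0 t) = eps_n \<beta> n * t"
    using Times(1)[where A="{True}" and B="{..t} \<times> UNIV"] Times(2)[where A="{..t}" and B=UNIV]
      assms(2) space_G G.prob_space bernoulli measure_uniform_unit_interval_atMost[OF assms(4,5)]
    by (simp add: coupling_factor_def selected_le_def)
  show "measure (coupling_factor \<beta> G n i) (selected_le 1 t) = eps_n \<beta> n * measure (G n i) {..t}"
    using Times(1)[where A="{True}" and B="UNIV \<times> {..t}"] Times(2)[where A=UNIV and B="{..t}"]
      assms(2) U_UNIV bernoulli
    by (simp add: coupling_factor_def selected_le_def)
qed

lemma expectation_Ftilde_diff:
  assumes "\<And>i. prob_space (G n i)" "\<And>i. sets (G n i) = sets borel" "0 \<le> \<beta>" "0 \<le> t" "t < 1"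
  shows "(\<integral>\<omega>. Ftilde n 1 \<omega> t \<partial>coupling \<beta> G n) - (\<integral>\<omega>. Ftilde n 0 \<omega> t \<partial>coupling \<beta> G n)
       = (1 / real n) * (\<Sum>i\<in>{1..n}. eps_n \<beta> n * (measure (G n i) {..t} - t))"
proof -
  have selected: "measure (coupling_factor \<beta> G n i) (selected_le 0 t) = eps_n \<beta> n * t"
    "measure (coupling_factor \<beta> G n i) (selected_le 1 t) = eps_n \<beta> n * measure (G n i) {..t}" for i
    using measure_selected_le[of G n i \<beta> t] assms by auto
  show ?thesis
    unfolding expectation_Ftilde[of G n, OF assms(1,2)] selected
    by (simp add: sum_subtractf right_diff_distrib)
qed

lemma wgt_le_sqrt2_div_sqrt:
  assumes "0 < t" "t \<le> 1/2"
  shows "wgt t \<le> sqrt 2 / sqrt t"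
proof -
  have "t * t \<le> t * (1/2)" using assms by (intro mult_left_mono) auto
  then have "t / 2 \<le> t * (1 - t)" by (simp add: algebra_simps)
  then have "sqrt t / sqrt 2 \<le> sqrt (t * (1 - t))"
    by (metis real_sqrt_divide real_sqrt_le_mono)
  moreover have "0 < sqrt t / sqrt 2" using assms by simp
  moreover have "0 < t * (1 - t)" using assms by simp
  ultimately have "1 / sqrt (t * (1 - t)) \<le> 1 / (sqrt t / sqrt 2)"
    by (intro divide_left_mono mult_pos_pos) auto
  then show ?thesis unfolding wgt_def by simp
qed

lemma scaled_wgt_le_powr:
  fixes x t g a q \<beta> :: real
  assumes x: "1 < x" and t: "t = x powr (-q)" "t \<le> 1/2" and g: "0 \<le> g" "g \<le> x powr (-a)"
  shows "sqrt x * x powr (-\<beta>) * g * wgt t \<le> sqrt 2 * x powr (1/2 - \<beta> - a + q/2)"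
proof -
  have "0 < t" "t < 1" using t x by simp_all
  have "sqrt t = x powr (-q/2)" using t x
    by (simp add: powr_half_sqrt[symmetric] powr_powr)
  then have "sqrt 2 / sqrt t = sqrt 2 * x powr (q/2)"
    by (simp add: powr_minus_divide)
  then have w: "wgt t \<le> sqrt 2 * x powr (q/2)"
    using wgt_le_sqrt2_div_sqrt[OF \<open>0 < t\<close> t(2)] by simp
  have "sqrt x * x powr (-\<beta>) * g * wgt t \<le> sqrt x * x powr (-\<beta>) * x powr (-a) * (sqrt 2 * x powr (q/2))"
    using g w x \<open>0 < t\<close> \<open>t < 1\<close> by (intro mult_mono mult_nonneg_nonneg) (auto simp: wgt_def)
  also have "\<dots> = sqrt 2 * (x powr (1/2) * x powr (-\<beta>) * x powr (-a) * x powr (q/2))"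
    using x by (simp add: powr_half_sqrt)
  also have "\<dots> = sqrt 2 * x powr (1/2 - \<beta> - a + q/2)"
    by (simp add: powr_add[symmetric])
  finally show ?thesis .
qed

lemma le_powr_of_neg_ln_close:
  fixes p x a d :: real
  assumes "0 < p" "1 < x" "\<bar>- ln p - a * ln x\<bar> \<le> d * ln x"
  shows "p \<le> x powr (d - a)"
proof -
  have "ln p \<le> (d - a) * ln x"
    using abs_le_D2[OF assms(3)] by (simp add: algebra_simps)
  then have "exp (ln p) \<le> exp ((d - a) * ln x)" by simp
  then show ?thesis using assms(1,2) by (simp add: powr_def)
qed

lemma exponent_margin:
  fixes f :: "real \<Rightarrow> real"
  assumes cont: "continuous_on {0..1} f"
    and sup: "(SUP q\<in>{0<..1}. (1 + q) / 2 - f q - \<beta>) < 0"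
    and beta: "1/2 < \<beta>"
  obtains c \<eta> where "0 < c" "0 < \<eta>" "1/2 - \<beta> + \<eta>/2 \<le> -c"
    "\<And>q. q \<in> {\<eta><..1} \<Longrightarrow> (1 + q) / 2 - f (q - \<eta>) - \<beta> \<le> -2 * c"
proof -
  define m where "m = - (SUP q\<in>{0<..1}. (1 + q) / 2 - f q - \<beta>)"
  have "m > 0" using sup unfolding m_def by simp
  have "compact ((\<lambda>q. (1 + q) / 2 - f q - \<beta>) ` {0..1})"
    using cont by (intro compact_continuous_image continuous_intros) auto
  then have "bdd_above ((\<lambda>q. (1 + q) / 2 - f q - \<beta>) ` {0<..1})"
    by (rule bdd_above_mono[OF bounded_imp_bdd_above[OF compact_imp_bounded]]) auto
  then have below_margin: "(1 + q) / 2 - f q - \<beta> \<le> -m" if "q \<in> {0<..1}" for q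
    using cSUP_upper[OF that] unfolding m_def by simp
  have "uniformly_continuous_on {0..1} f"
    using cont by (rule compact_uniformly_continuous) simp
  then obtain d where "d > 0"
    and d: "\<And>x x'. x \<in> {0..1} \<Longrightarrow> x' \<in> {0..1} \<Longrightarrow> dist x' x < d \<Longrightarrow> dist (f x') (f x) < m/2"
    using \<open>m > 0\<close> unfolding uniformly_continuous_on_def by (metis half_gt_zero)
  define \<eta> where "\<eta> = min (d/2) (\<beta> - 1/2)"
  define c where "c = min (m/4) ((\<beta> - 1/2) / 2)"
  show ?thesis
  proof
    show "0 < c" "0 < \<eta>" using \<open>m > 0\<close> \<open>d > 0\<close> beta by (auto simp: c_def \<eta>_def)
    have "\<eta> \<le> \<beta> - 1/2" "c \<le> (\<beta> - 1/2) / 2"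
      unfolding c_def \<eta>_def by (rule min.cobounded2)+
    then show "1/2 - \<beta> + \<eta>/2 \<le> -c" by (simp add: field_simps)
  next
    fix q assume q: "q \<in> {\<eta><..1}"
    have "\<eta> > 0" "\<eta> < d" using \<open>d > 0\<close> beta by (auto simp: \<eta>_def)
    with q have "dist (f (q - \<eta>)) (f q) < m/2" by (intro d) (auto simp: dist_real_def)
    then have "f q - m/2 < f (q - \<eta>)" unfolding dist_real_def abs_less_iff by linarith
    moreover have "(1 + q) / 2 - f q - \<beta> \<le> -m" using q \<open>\<eta> > 0\<close> by (intro below_margin) auto
    moreover have "c \<le> m/4" unfolding c_def by (rule min.cobounded1)
    ultimately show "(1 + q) / 2 - f (q - \<eta>) - \<beta> \<le> -2 * c" by (simp add: field_simps)
  qed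
qed

lemma weighted_tail_le_powr:
  fixes P :: "real measure" and f :: "real \<Rightarrow> real" and x t d c \<eta> \<beta> :: real
  assumes P: "prob_space P" "sets P = sets borel" and x: "1 < x"
    and tail: "\<And>q. q \<in> {0<..1} \<Longrightarrow> measure P {..< x powr (-q)} > 0 \<and>
      \<bar>- ln (measure P {..< x powr (-q)}) - f q * ln x\<bar> \<le> d * ln x"
    and margin: "0 < \<eta>" "1/2 - \<beta> + \<eta>/2 \<le> -c"
      "\<And>q. q \<in> {\<eta><..1} \<Longrightarrow> (1 + q) / 2 - f (q - \<eta>) - \<beta> \<le> -2 * c"
    and d: "d \<le> c"
    and t: "1/x < t" "t \<le> 1/2"
  shows "sqrt x * x powr (-\<beta>) * measure P {..t} * wgt t \<le> sqrt 2 * x powr (-c)"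
proof -
  interpret P: prob_space P by fact
  have "0 < 1/x" using x by simp
  with t(1) have "0 < t" by linarith
  define q where "q = - ln t / ln x"
  have tq: "t = x powr (-q)" using x \<open>0 < t\<close> by (simp add: q_def powr_def)
  have "ln (1/x) < ln t" using t(1) x \<open>0 < t\<close> by (intro ln_less_cancel_iff[THEN iffD2]) auto
  then have "q < 1" using x by (simp add: q_def ln_div field_simps)
  have "ln t < 0" using \<open>0 < t\<close> t(2) by simp
  then have "0 < q" using x by (simp add: q_def divide_neg_pos)
  consider "q \<le> \<eta>" | "\<eta> < q" by linarith
  then show ?thesis
  proof cases
    case 1
    have "measure P {..t} \<le> x powr (-0)" using x by simp
    then have "sqrt x * x powr (-\<beta>) * measure P {..t} * wgt t \<le> sqrt 2 * x powr (1/2 - \<beta> - 0 + q/2)"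
      by (rule scaled_wgt_le_powr[OF x tq t(2) measure_nonneg])
    also have "\<dots> \<le> sqrt 2 * x powr (-c)"
      using 1 margin(2) x by (intro mult_left_mono powr_mono) (auto simp: field_simps)
    finally show ?thesis .
  next
    case 2
    \<comment> \<open>The tail condition only controls \<open>{..< x powr -q'}\<close>; shifting \<open>q\<close> by \<open>\<eta>\<close> puts \<open>t\<close> below it.\<close>
    define q' where "q' = q - \<eta>"
    have q': "q' \<in> {0<..1}" using 2 \<open>q < 1\<close> margin(1) by (auto simp: q'_def)
    have "t < x powr (-q')" using x margin(1) by (simp add: tq q'_def)
    then have "measure P {..t} \<le> measure P {..< x powr (-q')}"
      using P(2) by (intro P.finite_measure_mono) auto
    also have "\<dots> \<le> x powr (d - f q')"
      using tail[OF q'] x by (intro le_powr_of_neg_ln_close) auto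
    finally have "measure P {..t} \<le> x powr (-(f q' - d))" by simp
    then have "sqrt x * x powr (-\<beta>) * measure P {..t} * wgt t
        \<le> sqrt 2 * x powr (1/2 - \<beta> - (f q' - d) + q/2)"
      by (rule scaled_wgt_le_powr[OF x tq t(2) measure_nonneg])
    also have "\<dots> \<le> sqrt 2 * x powr (-c)"
      using margin(3)[of q] 2 \<open>q < 1\<close> d x
      by (intro mult_left_mono powr_mono) (auto simp: q'_def field_simps)
    finally show ?thesis .
  qed
qed

lemma weighted_expectation_diff_le:
  fixes G :: "nat \<Rightarrow> nat \<Rightarrow> real measure" and t B :: real
  assumes G_prob: "\<And>i. prob_space (G n i)" and G_sets: "\<And>i. sets (G n i) = sets borel"
    and G_dom: "\<And>i. t \<le> measure (G n i) {..t}"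
    and "0 \<le> \<beta>" "0 < t" "t < 1" "1 \<le> n"
    and bound: "\<And>i. i \<in> {1..n} \<Longrightarrow> sqrt n * eps_n \<beta> n * measure (G n i) {..t} * wgt t \<le> B"
  shows "sqrt n * \<bar>(\<integral>\<omega>. Ftilde n 1 \<omega> t \<partial>coupling \<beta> G n) - (\<integral>\<omega>. Ftilde n 0 \<omega> t \<partial>coupling \<beta> G n)\<bar>
           * wgt t \<le> B"
proof -
  define excess where "excess i = eps_n \<beta> n * (measure (G n i) {..t} - t)" for i
  have excess_nonneg: "0 \<le> excess i" for i
    using eps_n_bounds[OF \<open>0 \<le> \<beta>\<close>] G_dom[of i] by (simp add: excess_def)
  have "0 \<le> wgt t" using \<open>0 < t\<close> \<open>t < 1\<close> by (simp add: wgt_def)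
  have excess_le: "sqrt n * excess i * wgt t \<le> B" if "i \<in> {1..n}" for i
  proof -
    have "0 \<le> sqrt n * eps_n \<beta> n * t * wgt t"
      using eps_n_bounds[OF \<open>0 \<le> \<beta>\<close>] \<open>0 < t\<close> \<open>0 \<le> wgt t\<close> by simp
    moreover have "sqrt n * excess i * wgt t
        = sqrt n * eps_n \<beta> n * measure (G n i) {..t} * wgt t - sqrt n * eps_n \<beta> n * t * wgt t"
      by (simp add: excess_def algebra_simps)
    ultimately show ?thesis using bound[OF that] by linarith
  qed
  have diff: "(\<integral>\<omega>. Ftilde n 1 \<omega> t \<partial>coupling \<beta> G n) - (\<integral>\<omega>. Ftilde n 0 \<omega> t \<partial>coupling \<beta> G n)
      = (1 / real n) * (\<Sum>i\<in>{1..n}. excess i)"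
    unfolding excess_def using assms by (intro expectation_Ftilde_diff) auto
  have "(\<Sum>i\<in>{1..n}. sqrt n * excess i * wgt t) = sqrt n * (\<Sum>i\<in>{1..n}. excess i) * wgt t"
    by (simp add: sum_distrib_left sum_distrib_right)
  then have "sqrt n * \<bar>(\<integral>\<omega>. Ftilde n 1 \<omega> t \<partial>coupling \<beta> G n) - (\<integral>\<omega>. Ftilde n 0 \<omega> t \<partial>coupling \<beta> G n)\<bar> * wgt t
      = (1 / real n) * (\<Sum>i\<in>{1..n}. sqrt n * excess i * wgt t)"
    unfolding diff using excess_nonneg by (simp add: sum_nonneg abs_of_nonneg)
  also have "\<dots> \<le> (1 / real n) * (real (card {1..n}) * B)"
    using excess_le by (intro mult_left_mono sum_bounded_above) auto
  also have "\<dots> = B" using \<open>1 \<le> n\<close> by simp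
  finally show ?thesis .
qed

lemma weighted_expectation_diff_le_powr:
  fixes G :: "nat \<Rightarrow> nat \<Rightarrow> real measure" and f :: "real \<Rightarrow> real" and t d c \<eta> \<beta> :: real
  assumes G_prob: "\<And>i. prob_space (G n i)" and G_sets: "\<And>i. sets (G n i) = sets borel"
    and G_dom: "\<And>i. t \<le> measure (G n i) {..t}"
    and tail: "\<And>i q. i \<in> {1..n} \<Longrightarrow> q \<in> {0<..1} \<Longrightarrow> measure (G n i) {..< real n powr (-q)} > 0 \<and>
      \<bar>- ln (measure (G n i) {..< real n powr (-q)}) - f q * ln (real n)\<bar> \<le> d * ln (real n)"
    and margin: "0 < \<eta>" "1/2 - \<beta> + \<eta>/2 \<le> -c"
      "\<And>q. q \<in> {\<eta><..1} \<Longrightarrow> (1 + q) / 2 - f (q - \<eta>) - \<beta> \<le> -2 * c"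
    and "d \<le> c" "0 \<le> \<beta>" "2 \<le> n" "1 / real n < t" "t \<le> 1/2"
  shows "sqrt n * \<bar>(\<integral>\<omega>. Ftilde n 1 \<omega> t \<partial>coupling \<beta> G n) - (\<integral>\<omega>. Ftilde n 0 \<omega> t \<partial>coupling \<beta> G n)\<bar>
           * wgt t \<le> sqrt 2 * real n powr (-c)"
proof (rule weighted_expectation_diff_le[of G n, OF G_prob G_sets G_dom])
  have "0 < 1 / real n" using \<open>2 \<le> n\<close> by simp
  then show "0 < t" "t < 1" using \<open>1 / real n < t\<close> \<open>t \<le> 1/2\<close> by linarith+
  show "sqrt n * eps_n \<beta> n * measure (G n i) {..t} * wgt t \<le> sqrt 2 * real n powr (-c)"
    if "i \<in> {1..n}" for i
    unfolding eps_n_def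
    by (rule weighted_tail_le_powr[OF G_prob G_sets _ tail[OF that] margin]) (use assms in auto)
qed (use assms in auto)

theorem lemma12:
  fixes \<beta> r t\<^sub>1 :: real
    and \<alpha> :: "real \<Rightarrow> real \<Rightarrow> real"
    and G :: "nat \<Rightarrow> nat \<Rightarrow> real measure"
    and \<delta> :: "nat \<Rightarrow> real"
  assumes beta: "1/2 < \<beta>" "\<beta> < 1"
    and r_pos: "0 < r"
    and G_prob: "\<And>n i. prob_space (G n i)"
    and G_sets: "\<And>n i. sets (G n i) = sets borel"
    and G_supp: "\<And>n i. measure (G n i) {0<..<1} = 1"
    and G_dom: "\<And>n i t. t \<in> {0<..<1} \<Longrightarrow> measure (G n i) {..t} \<ge> t"
    and alpha_cont: "continuous_on ({0..1} \<times> {0<..}) (\<lambda>(q, s). \<alpha> q s)"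
    and alpha_nonneg: "\<And>q s. q \<in> {0..1} \<Longrightarrow> 0 < s \<Longrightarrow> 0 \<le> \<alpha> q s"
    and alpha_mono_q: "\<And>q q' s. 0 \<le> q \<Longrightarrow> q \<le> q' \<Longrightarrow> q' \<le> 1 \<Longrightarrow> 0 < s \<Longrightarrow> \<alpha> q s \<le> \<alpha> q' s"
    and alpha_antimono_r: "\<And>q s s'. q \<in> {0..1} \<Longrightarrow> 0 < s \<Longrightarrow> s \<le> s' \<Longrightarrow> \<alpha> q s' \<le> \<alpha> q s"
    and delta_lim: "\<delta> \<longlonglongrightarrow> 0"
    and tail: "\<And>n i q. 1 \<le> i \<Longrightarrow> i \<le> n \<Longrightarrow> q \<in> {0<..1} \<Longrightarrow>
               measure (G n i) {..< real n powr (- q)} > 0 \<and>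
               \<bar>- ln (measure (G n i) {..< real n powr (- q)}) - \<alpha> q r * ln (real n)\<bar>
                 \<le> \<delta> n * ln (real n)"
    and maxcond: "(SUP q\<in>{0<..1}. (1 + q) / 2 - \<alpha> q r - \<beta>) < 0"
    and t1: "0 < t\<^sub>1" "t\<^sub>1 < 1/2"
  shows "\<forall>\<epsilon>>0. \<exists>n\<^sub>0. \<forall>n\<ge>n\<^sub>0. \<forall>t\<in>{1 / real n<..<t\<^sub>1}.
           sqrt (real n) *
           \<bar>(\<integral>\<omega>. Ftilde n 1 \<omega> t \<partial>coupling \<beta> G n) - (\<integral>\<omega>. Ftilde n 0 \<omega> t \<partial>coupling \<beta> G n)\<bar>
           * wgt t \<le> \<epsilon>"
proof (intro allI impI)
  fix \<epsilon> :: real assume "\<epsilon> > 0"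
  have "continuous_on {0..1} (\<lambda>q. (\<lambda>(q, s). \<alpha> q s) (q, r))"
    by (rule continuous_on_compose2[OF alpha_cont]) (use r_pos in \<open>auto intro!: continuous_intros\<close>)
  then obtain c \<eta> where "0 < c" and margin: "0 < \<eta>" "1/2 - \<beta> + \<eta>/2 \<le> -c"
    "\<And>q. q \<in> {\<eta><..1} \<Longrightarrow> (1 + q) / 2 - \<alpha> (q - \<eta>) r - \<beta> \<le> -2 * c"
    using exponent_margin[of "\<lambda>q. \<alpha> q r"] maxcond beta(1) by auto
  have "((\<lambda>n. sqrt 2 * real n powr (-c)) \<longlonglongrightarrow> 0)"
    using \<open>0 < c\<close> by (intro tendsto_mult_right_zero tendsto_neg_powr filterlim_real_sequentially) auto
  then have "eventually (\<lambda>n. sqrt 2 * real n powr (-c) < \<epsilon>) sequentially"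
    using \<open>0 < \<epsilon>\<close> by (rule order_tendstoD(2))
  moreover have "eventually (\<lambda>n. \<delta> n < c) sequentially"
    using delta_lim \<open>0 < c\<close> by (rule order_tendstoD(2))
  ultimately have "eventually (\<lambda>n. sqrt 2 * real n powr (-c) < \<epsilon> \<and> \<delta> n < c \<and> 2 \<le> n) sequentially"
    by (intro eventually_conj eventually_ge_at_top)
  then obtain n\<^sub>0 where n\<^sub>0: "\<And>n. n \<ge> n\<^sub>0 \<Longrightarrow> sqrt 2 * real n powr (-c) < \<epsilon> \<and> \<delta> n < c \<and> 2 \<le> n"
    unfolding eventually_sequentially by blast
  show "\<exists>n\<^sub>0. \<forall>n\<ge>n\<^sub>0. \<forall>t\<in>{1 / real n<..<t\<^sub>1}.
           sqrt (real n) *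
           \<bar>(\<integral>\<omega>. Ftilde n 1 \<omega> t \<partial>coupling \<beta> G n) - (\<integral>\<omega>. Ftilde n 0 \<omega> t \<partial>coupling \<beta> G n)\<bar>
           * wgt t \<le> \<epsilon>" (is "\<exists>n\<^sub>0. \<forall>n\<ge>n\<^sub>0. \<forall>t\<in>_. ?lhs n t \<le> \<epsilon>")
  proof (intro exI allI impI ballI)
    fix n :: nat and t :: real
    assume "n \<ge> n\<^sub>0" and t: "t \<in> {1 / real n<..<t\<^sub>1}"
    note n = n\<^sub>0[OF \<open>n \<ge> n\<^sub>0\<close>]
    have "0 < 1 / real n" "1 / real n < t" "t < t\<^sub>1" using n t by auto
    then have "0 < t" "t < 1" using t1 by linarith+
    have "?lhs n t \<le> sqrt 2 * real n powr (-c)"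
      by (rule weighted_expectation_diff_le_powr[where d = "\<delta> n", OF G_prob G_sets _ _ margin])
        (use n t t1 beta G_dom tail \<open>0 < t\<close> \<open>t < 1\<close> in auto)
    then show "?lhs n t \<le> \<epsilon>" using n by linarith
  qed
qed

end
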